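(* The one-dimensional subalgebras of ${\rm A}_5$ are exactly $\langle e_1\rangle$, $\langle e_2\rangle$ and $\langle e_1+\alpha e_2\pm e_3\rangle$ ($\alpha\in\mathbb{C}$). Up to automorphisms of ${\rm A}_5$, every one-dimensional subalgebra is equivalent to one of $\langle e_1\rangle$, $\langle e_2\rangle$, $\langle e_1+e_3\rangle$, $\langle e_1-e_3\rangle$.
   Context: ${\rm A}_5$ is the complex algebra with basis $e_1,e_2,e_3$, unit $e_1$ ($e_1e_i=e_ie_1=e_i$), $e_2e_3=e_2$, $e_3e_2=-e_2$, $e_3e_3=e_1$; all other products of basis elements are zero. A subalgebra is a linear subspace closed under multiplication (it need not contain $e_1$). Equivalence up to automorphisms means one is mapped onto the other by an algebra automorphism. $\langle S\rangle$ denotes linear span. *)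

theory Defs
  imports Complex_Main
begin

type_synonym a5 = "complex \<times> complex \<times> complex"

definition e1 :: a5 where "e1 = (1, 0, 0)"
definition e2 :: a5 where "e2 = (0, 1, 0)"
definition e3 :: a5 where "e3 = (0, 0, 1)"

definition a5_add :: "a5 \<Rightarrow> a5 \<Rightarrow> a5" where
  "a5_add x y = (case x of (a1,a2,a3) \<Rightarrow> case y of (b1,b2,b3) \<Rightarrow> (a1+b1, a2+b2, a3+b3))"

definition a5_scale :: "complex \<Rightarrow> a5 \<Rightarrow> a5" where
  "a5_scale c x = (case x of (a1,a2,a3) \<Rightarrow> (c*a1, c*a2, c*a3))"

text \<open>Bilinear extension of: e1 unit, e2 e3 = e2, e3 e2 = -e2, e3 e3 = e1, other products 0.\<close>
definition a5_mult :: "a5 \<Rightarrow> a5 \<Rightarrow> a5" where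
  "a5_mult x y = (case x of (a1,a2,a3) \<Rightarrow> case y of (b1,b2,b3) \<Rightarrow>
     (a1*b1 + a3*b3, a1*b2 + a2*b1 + a2*b3 - a3*b2, a1*b3 + a3*b1))"

definition a5_subspace :: "a5 set \<Rightarrow> bool" where
  "a5_subspace S \<longleftrightarrow> (0,0,0) \<in> S \<and> (\<forall>x\<in>S. \<forall>y\<in>S. a5_add x y \<in> S)
      \<and> (\<forall>c. \<forall>x\<in>S. a5_scale c x \<in> S)"

definition a5_subalgebra :: "a5 set \<Rightarrow> bool" where
  "a5_subalgebra S \<longleftrightarrow> a5_subspace S \<and> (\<forall>x\<in>S. \<forall>y\<in>S. a5_mult x y \<in> S)"

definition a5_line :: "a5 \<Rightarrow> a5 set" where
  "a5_line v = {a5_scale c v | c. True}"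

definition a5_one_dim :: "a5 set \<Rightarrow> bool" where
  "a5_one_dim S \<longleftrightarrow> (\<exists>v. v \<noteq> (0,0,0) \<and> S = a5_line v)"

definition a5_automorphism :: "(a5 \<Rightarrow> a5) \<Rightarrow> bool" where
  "a5_automorphism f \<longleftrightarrow> bij f
     \<and> (\<forall>x y. f (a5_add x y) = a5_add (f x) (f y))
     \<and> (\<forall>c x. f (a5_scale c x) = a5_scale c (f x))
     \<and> (\<forall>x y. f (a5_mult x y) = a5_mult (f x) (f y))"

end

theory Submission
  imports Defs
begin

text \<open>
  A line \<open>\<langle>v\<rangle>\<close> is closed under multiplication iff \<open>v v\<close> is a multiple \<open>l v\<close> of \<open>v\<close>.
  For \<open>v = (a, b, c)\<close> we have \<open>v v = (a\<^sup>2 + c\<^sup>2, 2 a b, 2 a c)\<close>, so either \<open>a = c = 0\<close>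
  (the line \<open>\<langle>e\<^sub>2\<rangle>\<close>), or \<open>l \<noteq> 2 a\<close> forces \<open>b = c = 0\<close> (the line \<open>\<langle>e\<^sub>1\<rangle>\<close>), or \<open>l = 2 a\<close>
  forces \<open>c = \<plusminus>a\<close>. The shears \<open>(a, b, c) \<mapsto> (a, b + g c, c)\<close> are automorphisms,
  because \<open>e\<^sub>3 + g e\<^sub>2\<close> again squares to \<open>e\<^sub>1\<close> and acts on \<open>e\<^sub>2\<close> like \<open>e\<^sub>3\<close>; they move
  \<open>(1, \<alpha>, \<plusminus>1)\<close> to \<open>(1, 0, \<plusminus>1)\<close>.
\<close>

lemma a5_line_eq_range: "a5_line v = range (\<lambda>c. a5_scale c v)"
  by (auto simp: a5_line_def)

lemma a5_scale_scale: "a5_scale a (a5_scale b v) = a5_scale (a * b) v"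
  by (cases v) (simp add: a5_scale_def)

lemma a5_scale_one: "a5_scale 1 v = v"
  by (cases v) (simp add: a5_scale_def)

lemma a5_add_scale: "a5_add (a5_scale a v) (a5_scale b v) = a5_scale (a + b) v"
  by (cases v) (simp add: a5_add_def a5_scale_def algebra_simps)

lemma a5_mult_scale:
  "a5_mult (a5_scale a x) (a5_scale b y) = a5_scale (a * b) (a5_mult x y)"
  by (cases x; cases y) (simp add: a5_mult_def a5_scale_def algebra_simps)

lemma a5_line_scale:
  assumes "c \<noteq> 0"
  shows "a5_line (a5_scale c v) = a5_line v"
proof -
  have "a5_scale d v = a5_scale (d / c) (a5_scale c v)" for d
    using assms by (simp add: a5_scale_scale)
  then have "a5_line v \<subseteq> a5_line (a5_scale c v)"
    unfolding a5_line_eq_range by blast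
  moreover have "a5_line (a5_scale c v) \<subseteq> a5_line v"
    unfolding a5_line_eq_range by (auto simp: a5_scale_scale)
  ultimately show ?thesis
    by blast
qed

lemma a5_subalgebra_line_iff:
  "a5_subalgebra (a5_line v) \<longleftrightarrow> (\<exists>l. a5_mult v v = a5_scale l v)"
proof
  assume "a5_subalgebra (a5_line v)"
  moreover have "v \<in> a5_line v"
    using a5_scale_one[of v] unfolding a5_line_eq_range by (metis rangeI)
  ultimately have "a5_mult v v \<in> a5_line v"
    by (simp add: a5_subalgebra_def)
  then show "\<exists>l. a5_mult v v = a5_scale l v"
    by (auto simp: a5_line_eq_range)
next
  assume "\<exists>l. a5_mult v v = a5_scale l v"
  then obtain l where l: "a5_mult v v = a5_scale l v" ..
  have "(0, 0, 0) = a5_scale 0 v"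
    by (cases v) (simp add: a5_scale_def)
  then show "a5_subalgebra (a5_line v)"
    unfolding a5_subalgebra_def a5_subspace_def a5_line_eq_range
    by (auto simp: a5_scale_scale a5_add_scale a5_mult_scale l)
qed

lemma a5_one_dim_line: "v \<noteq> (0, 0, 0) \<Longrightarrow> a5_one_dim (a5_line v)"
  unfolding a5_one_dim_def by blast

lemma a5_square_proportional_cases:
  assumes square: "a5_mult v v = a5_scale l v" and nonzero: "v \<noteq> (0, 0, 0)"
  obtains "a5_line v = a5_line (1, 0, 0)"
  | "a5_line v = a5_line (0, 1, 0)"
  | \<alpha> where "a5_line v = a5_line (1, \<alpha>, 1)"
  | \<alpha> where "a5_line v = a5_line (1, \<alpha>, -1)"
proof -
  obtain a b c where v: "v = (a, b, c)"
    by (cases v) auto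
  have eq1: "a * a + c * c = l * a" and eq2: "2 * a * b = l * b" and eq3: "2 * a * c = l * c"
    using square by (auto simp: v a5_mult_def a5_scale_def algebra_simps)
  consider "a = 0" | "a \<noteq> 0" "l = 2 * a" | "a \<noteq> 0" "l \<noteq> 2 * a"
    by blast
  then show thesis
  proof cases
    case 1
    with eq1 nonzero have "c = 0" "b \<noteq> 0"
      by (auto simp: v)
    with \<open>a = 0\<close> have "v = a5_scale b (0, 1, 0)"
      by (simp add: v a5_scale_def)
    with \<open>b \<noteq> 0\<close> show thesis
      using that(2) a5_line_scale by metis
  next
    case 2
    with eq1 have "(c - a) * (c + a) = 0"
      by (simp add: algebra_simps)
    then consider "c = a" | "c = -a"
      by (auto simp: eq_neg_iff_add_eq_0)
    then show thesis
    proof cases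
      case 1
      with \<open>a \<noteq> 0\<close> have "v = a5_scale a (1, b / a, 1)"
        by (simp add: v a5_scale_def)
      with \<open>a \<noteq> 0\<close> show thesis
        using that(3) a5_line_scale by metis
    next
      case 2
      with \<open>a \<noteq> 0\<close> have "v = a5_scale a (1, b / a, -1)"
        by (simp add: v a5_scale_def)
      with \<open>a \<noteq> 0\<close> show thesis
        using that(4) a5_line_scale by metis
    qed
  next
    case 3
    with eq2 eq3 have "b = 0" "c = 0"
      by (metis mult.commute mult_right_cancel)+
    then have "v = a5_scale a (1, 0, 0)"
      by (simp add: v a5_scale_def)
    with \<open>a \<noteq> 0\<close> show thesis
      using that(1) a5_line_scale by metis
  qed
qed

lemma a5_one_dim_subalgebra_line:
  assumes "a5_mult v v = a5_scale l v" "v \<noteq> (0, 0, 0)"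
  shows "a5_subalgebra (a5_line v) \<and> a5_one_dim (a5_line v)"
  using assms a5_subalgebra_line_iff a5_one_dim_line by blast

lemma a5_one_dim_subalgebra_iff:
  "a5_subalgebra S \<and> a5_one_dim S \<longleftrightarrow>
     S = a5_line (1, 0, 0) \<or> S = a5_line (0, 1, 0) \<or>
     (\<exists>\<alpha>. S = a5_line (1, \<alpha>, 1)) \<or> (\<exists>\<alpha>. S = a5_line (1, \<alpha>, -1))"
  (is "_ \<longleftrightarrow> ?normal_form")
proof
  assume "a5_subalgebra S \<and> a5_one_dim S"
  then obtain v l where S: "S = a5_line v"
    and square: "a5_mult v v = a5_scale l v" and nonzero: "v \<noteq> (0, 0, 0)"
    by (auto simp: a5_one_dim_def a5_subalgebra_line_iff)
  from square nonzero show ?normal_form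
    by (cases rule: a5_square_proportional_cases) (auto simp: S)
next
  assume ?normal_form
  then show "a5_subalgebra S \<and> a5_one_dim S"
  proof (elim disjE exE)
    assume "S = a5_line (1, 0, 0)"
    then show ?thesis
      using a5_one_dim_subalgebra_line[of "(1, 0, 0)" 1] by (simp add: a5_mult_def a5_scale_def)
  next
    assume "S = a5_line (0, 1, 0)"
    then show ?thesis
      using a5_one_dim_subalgebra_line[of "(0, 1, 0)" 0] by (simp add: a5_mult_def a5_scale_def)
  next
    fix \<alpha> assume "S = a5_line (1, \<alpha>, 1)"
    then show ?thesis
      using a5_one_dim_subalgebra_line[of "(1, \<alpha>, 1)" 2] by (simp add: a5_mult_def a5_scale_def)
  next
    fix \<alpha> assume "S = a5_line (1, \<alpha>, -1)"
    then show ?thesis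
      using a5_one_dim_subalgebra_line[of "(1, \<alpha>, -1)" 2] by (simp add: a5_mult_def a5_scale_def)
  qed
qed

definition a5_shear :: "complex \<Rightarrow> a5 \<Rightarrow> a5" where
  "a5_shear g x = (case x of (a, b, c) \<Rightarrow> (a, b + g * c, c))"

lemma a5_automorphism_shear: "a5_automorphism (a5_shear g)"
proof -
  have "a5_shear (-g) (a5_shear g x) = x" "a5_shear g (a5_shear (-g) x) = x" for x
    by (cases x; simp add: a5_shear_def)+
  then have "bij (a5_shear g)"
    by (metis bijI')
  then show ?thesis
    by (auto simp: a5_automorphism_def a5_shear_def a5_add_def a5_scale_def a5_mult_def
        algebra_simps)
qed

lemma a5_automorphism_id: "a5_automorphism id"
  unfolding a5_automorphism_def by (simp only: bij_id id_apply simp_thms)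

lemma a5_automorphism_image_line:
  assumes "a5_automorphism f"
  shows "f ` a5_line v = a5_line (f v)"
proof -
  have "f (a5_scale c v) = a5_scale c (f v)" for c
    using assms unfolding a5_automorphism_def by blast
  then show ?thesis
    by (simp add: a5_line_eq_range image_image)
qed

lemma a5_one_dim_subalgebra_normal_form:
  assumes "a5_subalgebra S" "a5_one_dim S"
  shows "\<exists>f. a5_automorphism f \<and>
    (f ` S = a5_line (1, 0, 0) \<or> f ` S = a5_line (0, 1, 0) \<or>
     f ` S = a5_line (1, 0, 1) \<or> f ` S = a5_line (1, 0, -1))"
proof -
  have shear: "a5_shear (-\<alpha>) (1, \<alpha>, 1) = (1, 0, 1)" "a5_shear \<alpha> (1, \<alpha>, -1) = (1, 0, -1)" for \<alpha>
    by (simp_all add: a5_shear_def)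
  from assms consider "S = a5_line (1, 0, 0) \<or> S = a5_line (0, 1, 0)"
    | \<alpha> where "S = a5_line (1, \<alpha>, 1)" | \<alpha> where "S = a5_line (1, \<alpha>, -1)"
    using a5_one_dim_subalgebra_iff by blast
  then show ?thesis
  proof cases
    case 1
    with a5_automorphism_id show ?thesis
      by (intro exI[of _ id]) auto
  next
    case (2 \<alpha>)
    then have "a5_shear (-\<alpha>) ` S = a5_line (1, 0, 1)"
      by (simp add: a5_automorphism_image_line[OF a5_automorphism_shear] shear)
    with a5_automorphism_shear show ?thesis
      by blast
  next
    case (3 \<alpha>)
    then have "a5_shear \<alpha> ` S = a5_line (1, 0, -1)"
      by (simp add: a5_automorphism_image_line[OF a5_automorphism_shear] shear)
    with a5_automorphism_shear show ?thesis
      by blast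
  qed
qed

theorem mainTheorem12:
  shows "(\<forall>S. (a5_subalgebra S \<and> a5_one_dim S) \<longleftrightarrow>
            (S = a5_line e1 \<or> S = a5_line e2 \<or>
             (\<exists>\<alpha>. S = a5_line (a5_add (a5_add e1 (a5_scale \<alpha> e2)) e3)) \<or>
             (\<exists>\<alpha>. S = a5_line (a5_add (a5_add e1 (a5_scale \<alpha> e2)) (a5_scale (-1) e3)))))
       \<and> (\<forall>S. a5_subalgebra S \<and> a5_one_dim S \<longrightarrow>
            (\<exists>f. a5_automorphism f \<and>
               (f ` S = a5_line e1 \<or> f ` S = a5_line e2 \<or>
                f ` S = a5_line (a5_add e1 e3) \<or> f ` S = a5_line (a5_add e1 (a5_scale (-1) e3)))))"
proof -
  have coordinates:
    "a5_add (a5_add e1 (a5_scale \<alpha> e2)) e3 = (1, \<alpha>, 1)"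
    "a5_add (a5_add e1 (a5_scale \<alpha> e2)) (a5_scale (-1) e3) = (1, \<alpha>, -1)"
    "a5_add e1 e3 = (1, 0, 1)" "a5_add e1 (a5_scale (-1) e3) = (1, 0, -1)" for \<alpha>
    by (simp_all add: e1_def e2_def e3_def a5_add_def a5_scale_def)
  show ?thesis
    unfolding coordinates unfolding e1_def e2_def
    by (intro conjI allI impI a5_one_dim_subalgebra_iff a5_one_dim_subalgebra_normal_form; simp)
qed

end
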